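(* Let $Q$ be a quiver without oriented cycles and $v_0\in Q_0$ a vertex whose only incident arrows are arrows $a_1,\dots,a_l$ with $ta_i=v_i$, $ha_i=v_0$, and a single arrow $b$ with $tb=v_0$, $hb=w$. Let $\beta$ be a dimension vector and $\sigma\in\mathbb{Z}^{Q_0}$ a weight with $\beta(v_0)\ge\beta(w)$ and $\sigma(v_0)=0$. Let $\overline{Q}$ be the quiver with $\overline{Q}_0=Q_0\setminus\{v_0\}$ and $\overline{Q}_1=(Q_1\setminus\{b,a_1,\dots,a_l\})\cup\{ba_1,\dots,ba_l\}$, where $ba_i$ is a new arrow from $v_i$ to $w$. Let $\overline\beta,\overline\sigma$ be the restrictions of $\beta,\sigma$ to $\overline{Q}_0$. Then $\operatorname{SI}(Q,\beta)_\sigma\cong\operatorname{SI}(\overline{Q},\overline\beta)_{\overline\sigma}$. The same holds with the orientations of all the arrows $a_i$ and $b$ reversed.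
   Context: Work over an algebraically closed field $k$ of characteristic zero. $\operatorname{SI}(Q,\beta)_\sigma$ is the space of polynomial functions $f$ on $\operatorname{Rep}(Q,\beta)=\bigoplus_a\operatorname{Hom}_k(k^{\beta(ta)},k^{\beta(ha)})$ satisfying $g\cdot f=\sigma(g)f$ for all $g\in\operatorname{GL}(\beta)=\prod_x\operatorname{GL}(\beta(x))$, where $\operatorname{GL}(\beta)$ acts by $(g\cdot W)(a)=g(ha)W(a)g(ta)^{-1}$ and $\sigma(g)=\prod_x\det(g(x))^{\sigma(x)}$. *)

theory Defs
  imports "HOL-Computational_Algebra.Polynomial" "Jordan_Normal_Form.Determinant"
begin

definition quiver :: "'v set \<Rightarrow> 'a set \<Rightarrow> ('a \<Rightarrow> 'v) \<Rightarrow> ('a \<Rightarrow> 'v) \<Rightarrow> bool" where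
  "quiver V A tA hA \<longleftrightarrow> finite V \<and> finite A \<and> (\<forall>a\<in>A. tA a \<in> V \<and> hA a \<in> V)"

definition no_oriented_cycles :: "'a set \<Rightarrow> ('a \<Rightarrow> 'v) \<Rightarrow> ('a \<Rightarrow> 'v) \<Rightarrow> bool" where
  "no_oriented_cycles A tA hA \<longleftrightarrow> (\<forall>x. (x, x) \<notin> {(tA a, hA a) | a. a \<in> A}\<^sup>+)"

definition alg_closed_char0 :: "'k::field_char_0 itself \<Rightarrow> bool" where
  "alg_closed_char0 _ \<longleftrightarrow> (\<forall>p :: 'k poly. degree p > 0 \<longrightarrow> (\<exists>x. poly p x = 0))"

definition Rep :: "'a set \<Rightarrow> ('a \<Rightarrow> 'v) \<Rightarrow> ('a \<Rightarrow> 'v) \<Rightarrow> ('v \<Rightarrow> nat) \<Rightarrow> ('a \<Rightarrow> 'k::field mat) set" where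
  "Rep A tA hA \<beta> = {W. (\<forall>a\<in>A. W a \<in> carrier_mat (\<beta> (hA a)) (\<beta> (tA a))) \<and> (\<forall>a. a \<notin> A \<longrightarrow> W a = 0\<^sub>m 0 0)}"

definition GL :: "'v set \<Rightarrow> ('v \<Rightarrow> nat) \<Rightarrow> ('v \<Rightarrow> 'k::field mat) set" where
  "GL V \<beta> = {g. (\<forall>x\<in>V. g x \<in> carrier_mat (\<beta> x) (\<beta> x) \<and> det (g x) \<noteq> 0) \<and> (\<forall>x. x \<notin> V \<longrightarrow> g x = 1\<^sub>m 0)}"

definition mat_inv :: "'k::field mat \<Rightarrow> 'k mat" where
  "mat_inv M = (SOME N. N \<in> carrier_mat (dim_row M) (dim_row M) \<and> inverts_mat M N \<and> inverts_mat N M)"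

definition gl_act :: "'a set \<Rightarrow> ('a \<Rightarrow> 'v) \<Rightarrow> ('a \<Rightarrow> 'v) \<Rightarrow> ('v \<Rightarrow> 'k::field mat) \<Rightarrow> ('a \<Rightarrow> 'k mat) \<Rightarrow> ('a \<Rightarrow> 'k mat)" where
  "gl_act A tA hA g W = (\<lambda>a. if a \<in> A then g (hA a) * W a * mat_inv (g (tA a)) else W a)"

definition weight_char :: "'v set \<Rightarrow> ('v \<Rightarrow> int) \<Rightarrow> ('v \<Rightarrow> 'k::field mat) \<Rightarrow> 'k" where
  "weight_char V \<sigma> g = (\<Prod>x\<in>V. det (g x) powi \<sigma> x)"

inductive_set poly_funs :: "('x \<Rightarrow> 'k::comm_ring_1) set \<Rightarrow> ('x \<Rightarrow> 'k) set" for C where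
  pf_const: "(\<lambda>_. c) \<in> poly_funs C"
| pf_coord: "f \<in> C \<Longrightarrow> f \<in> poly_funs C"
| pf_add: "f \<in> poly_funs C \<Longrightarrow> g \<in> poly_funs C \<Longrightarrow> (\<lambda>x. f x + g x) \<in> poly_funs C"
| pf_mult: "f \<in> poly_funs C \<Longrightarrow> g \<in> poly_funs C \<Longrightarrow> (\<lambda>x. f x * g x) \<in> poly_funs C"

definition rep_coords :: "'a set \<Rightarrow> ('a \<Rightarrow> 'v) \<Rightarrow> ('a \<Rightarrow> 'v) \<Rightarrow> ('v \<Rightarrow> nat) \<Rightarrow> (('a \<Rightarrow> 'k::field mat) \<Rightarrow> 'k) set" where
  "rep_coords A tA hA \<beta> = {(\<lambda>W. W a $$ (i, j)) | a i j. a \<in> A \<and> i < \<beta> (hA a) \<and> j < \<beta> (tA a)}"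

(* SI(Q,beta)_sigma: polynomial functions on Rep(Q,beta) (as functions on Rep; set to 0 off Rep)
   with (g.f) = sigma(g) f, where (g.f)(W) = f(g^{-1}.W), i.e. f(g.W) = sigma(g)^{-1} f(W). *)
definition SI :: "'v set \<Rightarrow> 'a set \<Rightarrow> ('a \<Rightarrow> 'v) \<Rightarrow> ('a \<Rightarrow> 'v) \<Rightarrow> ('v \<Rightarrow> nat) \<Rightarrow> ('v \<Rightarrow> int)
    \<Rightarrow> (('a \<Rightarrow> 'k::field mat) \<Rightarrow> 'k) set" where
  "SI V A tA hA \<beta> \<sigma> = {f.
      (\<exists>p \<in> poly_funs (rep_coords A tA hA \<beta>). \<forall>W \<in> Rep A tA hA \<beta>. f W = p W)
    \<and> (\<forall>W. W \<notin> Rep A tA hA \<beta> \<longrightarrow> f W = 0)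
    \<and> (\<forall>g \<in> GL V \<beta>. \<forall>W \<in> Rep A tA hA \<beta>.
          f (gl_act A tA hA g W) = inverse (weight_char V \<sigma> g) * f W)}"

definition lin_iso :: "('x \<Rightarrow> 'k::field) set \<Rightarrow> ('y \<Rightarrow> 'k) set \<Rightarrow> bool" where
  "lin_iso S T \<longleftrightarrow> (\<exists>\<phi>. bij_betw \<phi> S T \<and>
      (\<forall>f\<in>S. \<forall>g\<in>S. \<forall>c. \<phi> (\<lambda>x. c * f x + g x) = (\<lambda>y. c * \<phi> f y + \<phi> g y)))"

end

theory Submission
  imports Defs "Jordan_Normal_Form.Char_Poly"
begin

(* Let v0 have b : v0 -> w as its only outgoing arrow, let beta(w) <= beta(v0) and sigma(v0) = 0.
   The contraction map sends W to the representation of the contracted quiver in which an arrow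
   a into v0 carries W(b) W(a); it has the section expanding W' to b := E = (I 0) and
   a := E^T W'(a).  Pulling semi-invariants back along these two maps gives mutually inverse
   linear maps between SI(Q,beta)_sigma and SI(Q',beta)_sigma.  The only non-formal point is
   that a semi-invariant f factors through the contraction map, f (expand (contract W)) = f W.
   It is proved by specialisation: with B = W(b) and H(s) = E^T B + s I one has E H(s) = B + s E,
   so for all but finitely many s the element H(s) of GL(beta(v0)), which acts with trivial
   character, moves b from B + s E to E; a second such argument with diag(I, t I), t -> 0,
   kills the rows beyond beta(w).  The values of f along these lines are polynomials in the
   parameter, so the identities extend to the finitely many excluded values, in particular to
   s = 0 and t = 0.  Only characteristic zero (an infinite field) is used, not algebraic
   closedness.  The version with all arrows at v0 reversed follows by transposing
   representations, which identifies SI(Q,beta)_sigma with SI(Q^op,beta)_(-sigma). *)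

lemma mat_inv_props:
  fixes M :: "'k::field mat"
  assumes M: "M \<in> carrier_mat n n" and d: "det M \<noteq> 0"
  shows "mat_inv M \<in> carrier_mat n n" "M * mat_inv M = 1\<^sub>m n" "mat_inv M * M = 1\<^sub>m n"
proof -
  from det_non_zero_imp_unit[OF M d, of "()"]
  obtain N where N: "N \<in> carrier_mat n n" "M * N = 1\<^sub>m n" "N * M = 1\<^sub>m n"
    unfolding Units_def ring_mat_def by auto
  have "\<exists>N. N \<in> carrier_mat (dim_row M) (dim_row M) \<and> inverts_mat M N \<and> inverts_mat N M"
    using N M unfolding inverts_mat_def by (intro exI[of _ N]) auto
  from someI_ex[OF this] M
  show "mat_inv M \<in> carrier_mat n n" "M * mat_inv M = 1\<^sub>m n" "mat_inv M * M = 1\<^sub>m n"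
    unfolding mat_inv_def inverts_mat_def by auto
qed

lemma mat_inv_unique:
  fixes M N :: "'k::field mat"
  assumes M: "M \<in> carrier_mat n n" and N: "N \<in> carrier_mat n n"
    and MN: "M * N = 1\<^sub>m n" and NM: "N * M = 1\<^sub>m n"
  shows "mat_inv M = N"
proof -
  have "det M * det N = 1" using det_mult[OF M N] MN by simp
  hence "det M \<noteq> 0" by auto
  note I = mat_inv_props[OF M this]
  have "mat_inv M = (N * M) * mat_inv M" using I NM by simp
  also have "\<dots> = N * (M * mat_inv M)" using I M N by (simp add: assoc_mult_mat)
  also have "\<dots> = N" using I N by simp
  finally show ?thesis .
qed

lemma mult_cancel_inner:
  fixes X :: "'k::field mat"
  assumes X: "X \<in> carrier_mat r m" and P: "P \<in> carrier_mat m n" and I: "I \<in> carrier_mat n n"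
    and G: "G \<in> carrier_mat n n" and IG: "I * G = 1\<^sub>m n" and Y: "Y \<in> carrier_mat n c"
    and J: "J \<in> carrier_mat c d"
  shows "(X * P * I) * (G * Y * J) = X * (P * Y) * J"
proof -
  have XP: "X * P \<in> carrier_mat r n" and YJ: "Y * J \<in> carrier_mat n d" using X P Y J by auto
  have "(X * P * I) * (G * Y * J) = (X * P * I) * (G * (Y * J))"
    using assoc_mult_mat[OF G Y J] by simp
  also have "\<dots> = ((X * P * I) * G) * (Y * J)"
    using assoc_mult_mat[OF mult_carrier_mat[OF XP I] G YJ] by simp
  also have "(X * P * I) * G = X * P"
    using assoc_mult_mat[OF XP I G] IG right_mult_one_mat[OF XP] by simp
  also have "(X * P) * (Y * J) = X * (P * Y) * J"
    using assoc_mult_mat[OF X P YJ] assoc_mult_mat[OF P Y J]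
      assoc_mult_mat[OF X mult_carrier_mat[OF P Y] J] by simp
  finally show ?thesis .
qed

lemma mat_inv_one [simp]: "mat_inv (1\<^sub>m n :: 'k::field mat) = 1\<^sub>m n"
  by (rule mat_inv_unique[of _ n]) auto

lemma det_nonzero_if_inverse:
  fixes M N :: "'k::field mat"
  assumes "M \<in> carrier_mat n n" "N \<in> carrier_mat n n" "M * N = 1\<^sub>m n"
  shows "det M \<noteq> 0"
  using det_mult[OF assms(1,2)] assms(3) by auto

definition trunc_mat :: "nat \<Rightarrow> nat \<Rightarrow> 'k::field mat" where
  "trunc_mat m n = mat m n (\<lambda>(i, j). if i = j then 1 else 0)"

definition tail_scale_mat :: "nat \<Rightarrow> nat \<Rightarrow> 'k \<Rightarrow> 'k::field mat" where
  "tail_scale_mat m n t = mat n n (\<lambda>(i, j). if i = j then (if i < m then 1 else t) else 0)"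

lemma sum_delta_mult_left:
  "(\<Sum>k = 0..<(n::nat). (if i = k then c else 0) * f k) = (if i < n then c * f i else (0::'k::semiring_0))"
  "(\<Sum>k = 0..<(n::nat). (if k = i then c else 0) * f k) = (if i < n then c * f i else (0::'k::semiring_0))"
  by (simp_all add: if_distrib[of "\<lambda>x. x * _"] sum.delta cong: if_cong)

lemma sum_delta_mult_right:
  "(\<Sum>k = 0..<(n::nat). f k * (if k = j then c else 0)) = (if j < n then f j * c else (0::'k::semiring_0))"
  by (simp add: if_distrib[of "\<lambda>x. _ * x"] sum.delta' cong: if_cong)

lemma trunc_mat_dim [simp]: "dim_row (trunc_mat m n) = m" "dim_col (trunc_mat m n) = n"
  by (simp_all add: trunc_mat_def)

lemma trunc_mat_carrier [simp]:
  "trunc_mat m n \<in> carrier_mat m n" "transpose_mat (trunc_mat m n) \<in> carrier_mat n m"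
  by (auto simp: trunc_mat_def)

lemma tail_scale_mat_carrier [simp]: "tail_scale_mat m n t \<in> carrier_mat n n"
  by (simp add: tail_scale_mat_def)

lemma trunc_mat_transpose:
  assumes "m \<le> n"
  shows "trunc_mat m n * transpose_mat (trunc_mat m n) = (1\<^sub>m m :: 'k::field mat)"
  using assms by (intro eq_matI)
    (auto simp: trunc_mat_def scalar_prod_def sum_delta_mult_left sum_delta_mult_right)

lemma trunc_mat_tail_scale:
  assumes "m \<le> n"
  shows "trunc_mat m n * tail_scale_mat m n t = (trunc_mat m n :: 'k::field mat)"
  using assms by (intro eq_matI)
    (auto simp: trunc_mat_def tail_scale_mat_def scalar_prod_def sum_delta_mult_left sum_delta_mult_right)

lemma tail_scale_zero_transpose:
  "tail_scale_mat m n 0 * transpose_mat (trunc_mat m n) = (transpose_mat (trunc_mat m n) :: 'k::field mat)"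
  by (intro eq_matI)
    (auto simp: trunc_mat_def tail_scale_mat_def scalar_prod_def sum_delta_mult_left sum_delta_mult_right)

lemma tail_scale_mult:
  "tail_scale_mat m n t * tail_scale_mat m n u = (tail_scale_mat m n (t * u) :: 'k::field mat)"
  by (intro eq_matI)
    (auto simp: tail_scale_mat_def scalar_prod_def sum_delta_mult_left sum_delta_mult_right)

lemma tail_scale_one: "tail_scale_mat m n 1 = (1\<^sub>m n :: 'k::field mat)"
  by (intro eq_matI) (auto simp: tail_scale_mat_def)

lemma tail_scale_invertible:
  assumes "t \<noteq> 0"
  shows "det (tail_scale_mat m n t :: 'k::field mat) \<noteq> 0"
    and "mat_inv (tail_scale_mat m n t :: 'k::field mat) = tail_scale_mat m n (1 / t)"
proof -
  have "tail_scale_mat m n t * tail_scale_mat m n (1 / t) = (1\<^sub>m n :: 'k mat)"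
    "tail_scale_mat m n (1 / t) * tail_scale_mat m n t = (1\<^sub>m n :: 'k mat)"
    using assms by (simp_all add: tail_scale_mult tail_scale_one)
  then show "det (tail_scale_mat m n t :: 'k mat) \<noteq> 0"
    and "mat_inv (tail_scale_mat m n t :: 'k mat) = tail_scale_mat m n (1 / t)"
    using det_nonzero_if_inverse mat_inv_unique tail_scale_mat_carrier by metis+
qed

(* For all but finitely many scalars s the shifted matrix K + s I is invertible: its
  determinant is the characteristic polynomial of -K evaluated at s. *)
lemma det_shift_cofinite:
  fixes K :: "'k::field mat"
  assumes K: "K \<in> carrier_mat n n"
  shows "finite {s. det (K + s \<cdot>\<^sub>m 1\<^sub>m n) = 0}"
proof -
  have mK: "-K \<in> carrier_mat n n" using K by auto
  have "K + s \<cdot>\<^sub>m 1\<^sub>m n = - char_matrix (-K) s" for s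
    unfolding char_matrix_def using K by (intro eq_matI) auto
  hence "det (K + s \<cdot>\<^sub>m 1\<^sub>m n) = poly (char_poly (-K)) s" for s
    using char_poly_matrix[OF mK, of s] by simp
  moreover have "char_poly (-K) \<noteq> 0" using degree_monic_char_poly[OF mK] by auto
  ultimately show ?thesis using poly_roots_finite by simp
qed

definition poly_path :: "nat \<Rightarrow> nat \<Rightarrow> ('k::comm_ring_1 \<Rightarrow> 'k mat) \<Rightarrow> bool" where
  "poly_path r c X \<longleftrightarrow>
     (\<forall>s. X s \<in> carrier_mat r c) \<and> (\<forall>i<r. \<forall>j<c. \<exists>P. \<forall>s. X s $$ (i, j) = poly P s)"

lemma poly_path_const: "X \<in> carrier_mat r c \<Longrightarrow> poly_path r c (\<lambda>_. X)"
  unfolding poly_path_def by (metis poly_const_conv)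

lemma poly_path_affine:
  assumes "X \<in> carrier_mat r c" "Y \<in> carrier_mat r c"
  shows "poly_path r c (\<lambda>s. X + s \<cdot>\<^sub>m Y)"
  unfolding poly_path_def
proof (intro conjI allI impI)
  fix i j assume "i < r" "j < c"
  then have "(X + s \<cdot>\<^sub>m Y) $$ (i, j) = poly [:X $$ (i, j), Y $$ (i, j):] s" for s
    using assms by (simp add: mult.commute)
  then show "\<exists>P. \<forall>s. (X + s \<cdot>\<^sub>m Y) $$ (i, j) = poly P s" by blast
qed (use assms in simp)

lemma poly_path_tail_scale: "poly_path n n (\<lambda>t. tail_scale_mat m n t :: 'k::field mat)"
  unfolding poly_path_def
proof (intro conjI allI impI)
  fix i j assume "i < n" "j < n"
  then have "tail_scale_mat m n t $$ (i, j) =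
      poly (if i = j then (if i < m then 1 else [:0, 1:]) else 0) t" for t :: 'k
    by (simp add: tail_scale_mat_def)
  then show "\<exists>P. \<forall>t. (tail_scale_mat m n t :: 'k mat) $$ (i, j) = poly P t" by blast
qed simp

lemma poly_path_mult:
  assumes X: "poly_path r n X" and Y: "poly_path n c Y"
  shows "poly_path r c (\<lambda>s. X s * Y s)"
  unfolding poly_path_def
proof (intro conjI allI impI)
  show "X s * Y s \<in> carrier_mat r c" for s
    using X Y unfolding poly_path_def by (meson mult_carrier_mat)
  fix i j assume i: "i < r" and j: "j < c"
  have "\<forall>k. \<exists>P. k < n \<longrightarrow> (\<forall>s. X s $$ (i, k) = poly P s)"
    using X i unfolding poly_path_def by blast
  from choice[OF this] obtain PX where PX: "\<And>k s. k < n \<Longrightarrow> X s $$ (i, k) = poly (PX k) s"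
    by blast
  have "\<forall>k. \<exists>P. k < n \<longrightarrow> (\<forall>s. Y s $$ (k, j) = poly P s)"
    using Y j unfolding poly_path_def by blast
  from choice[OF this] obtain PY where PY: "\<And>k s. k < n \<Longrightarrow> Y s $$ (k, j) = poly (PY k) s"
    by blast
  have "(X s * Y s) $$ (i, j) = poly (\<Sum>k = 0..<n. PX k * PY k) s" for s
  proof -
    have "X s \<in> carrier_mat r n" "Y s \<in> carrier_mat n c" using X Y unfolding poly_path_def by auto
    then show ?thesis using i j PX PY by (simp add: scalar_prod_def poly_sum)
  qed
  then show "\<exists>P. \<forall>s. (X s * Y s) $$ (i, j) = poly P s" by blast
qed

lemma poly_eq_off_finite:
  fixes P Q :: "'k::field_char_0 poly"
  assumes F: "finite F" and eq: "\<And>s. s \<notin> F \<Longrightarrow> poly P s = poly Q s"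
  shows "poly P x = poly Q x"
proof (rule ccontr)
  assume "poly P x \<noteq> poly Q x"
  hence "P - Q \<noteq> 0" by auto
  hence "finite {s. poly (P - Q) s = 0}" by (rule poly_roots_finite)
  moreover have "- F \<subseteq> {s. poly (P - Q) s = 0}" using eq by auto
  ultimately have "finite (- F)" by (rule finite_subset[rotated])
  with F have "finite (UNIV :: 'k set)" by (metis Compl_partition2 finite_Un)
  thus False using infinite_UNIV_char_0 by auto
qed

lemma poly_funs_subst:
  assumes p: "p \<in> poly_funs C"
    and coords: "\<And>c. c \<in> C \<Longrightarrow> \<exists>q \<in> poly_funs C'. \<forall>W\<in>R. c (T W) = q W"
  shows "\<exists>q \<in> poly_funs C'. \<forall>W\<in>R. p (T W) = q W"
  using p
proof induction
  case (pf_const c)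
  show ?case by (intro bexI[of _ "\<lambda>_. c"] poly_funs.pf_const) simp
next
  case (pf_coord f)
  then show ?case using coords by blast
next
  case (pf_add f g)
  then obtain q1 q2 where "q1 \<in> poly_funs C'" "q2 \<in> poly_funs C'"
    "\<forall>W\<in>R. f (T W) = q1 W" "\<forall>W\<in>R. g (T W) = q2 W" by blast
  then show ?case by (intro bexI[of _ "\<lambda>x. q1 x + q2 x"] poly_funs.pf_add) auto
next
  case (pf_mult f g)
  then obtain q1 q2 where "q1 \<in> poly_funs C'" "q2 \<in> poly_funs C'"
    "\<forall>W\<in>R. f (T W) = q1 W" "\<forall>W\<in>R. g (T W) = q2 W" by blast
  then show ?case by (intro bexI[of _ "\<lambda>x. q1 x * q2 x"] poly_funs.pf_mult) auto
qed

lemma poly_funs_along_curve: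
  fixes X :: "'k::comm_ring_1 \<Rightarrow> 'x"
  assumes p: "p \<in> poly_funs C"
    and coords: "\<And>c. c \<in> C \<Longrightarrow> \<exists>P. \<forall>s. c (X s) = poly P s"
  shows "\<exists>P. \<forall>s. p (X s) = poly P s"
  using p
proof induction
  case (pf_const c)
  show ?case by (metis poly_const_conv)
next
  case (pf_coord f)
  then show ?case using coords by blast
next
  case (pf_add f g)
  then obtain P Q where "\<forall>s. f (X s) = poly P s" "\<forall>s. g (X s) = poly Q s" by blast
  then show ?case by (intro exI[of _ "P + Q"]) simp
next
  case (pf_mult f g)
  then obtain P Q where "\<forall>s. f (X s) = poly P s" "\<forall>s. g (X s) = poly Q s" by blast
  then show ?case by (intro exI[of _ "P * Q"]) simp
qed

lemma poly_funs_sum: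
  assumes "finite I" "\<And>i. i \<in> I \<Longrightarrow> f i \<in> poly_funs C"
  shows "(\<lambda>x. \<Sum>i\<in>I. f i x) \<in> poly_funs C"
  using assms
proof (induction I rule: finite_induct)
  case empty
  show ?case using poly_funs.pf_const[of 0] by simp
next
  case (insert i I)
  then have "(\<lambda>x. f i x + (\<Sum>i\<in>I. f i x)) \<in> poly_funs C" by (intro poly_funs.pf_add) auto
  then show ?case using insert by simp
qed

lemma rep_coordsI:
  "a \<in> A \<Longrightarrow> i < \<beta> (hA a) \<Longrightarrow> j < \<beta> (tA a) \<Longrightarrow> (\<lambda>W. W a $$ (i, j)) \<in> rep_coords A tA hA \<beta>"
  unfolding rep_coords_def by blast

lemma Rep_carrier:
  "W \<in> Rep A tA hA \<beta> \<Longrightarrow> a \<in> A \<Longrightarrow> W a \<in> carrier_mat (\<beta> (hA a)) (\<beta> (tA a))"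
  unfolding Rep_def by auto

lemma Rep_outside: "W \<in> Rep A tA hA \<beta> \<Longrightarrow> a \<notin> A \<Longrightarrow> W a = 0\<^sub>m 0 0"
  unfolding Rep_def by auto

lemma RepI:
  "(\<And>a. a \<in> A \<Longrightarrow> W a \<in> carrier_mat (\<beta> (hA a)) (\<beta> (tA a))) \<Longrightarrow>
   (\<And>a. a \<notin> A \<Longrightarrow> W a = 0\<^sub>m 0 0) \<Longrightarrow> W \<in> Rep A tA hA \<beta>"
  unfolding Rep_def by auto

lemma GL_carrier: "g \<in> GL V \<beta> \<Longrightarrow> x \<in> V \<Longrightarrow> g x \<in> carrier_mat (\<beta> x) (\<beta> x) \<and> det (g x) \<noteq> 0"
  unfolding GL_def by auto

lemma gl_act_Rep:
  fixes W :: "'a \<Rightarrow> 'k::field mat"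
  assumes Q: "quiver V A tA hA" and g: "g \<in> GL V \<beta>" and W: "W \<in> Rep A tA hA \<beta>"
  shows "gl_act A tA hA g W \<in> Rep A tA hA \<beta>"
proof (rule RepI)
  fix a assume a: "a \<in> A"
  then have "tA a \<in> V" "hA a \<in> V" using Q unfolding quiver_def by auto
  then have "g (hA a) \<in> carrier_mat (\<beta> (hA a)) (\<beta> (hA a))"
    "mat_inv (g (tA a)) \<in> carrier_mat (\<beta> (tA a)) (\<beta> (tA a))"
    using GL_carrier[OF g] mat_inv_props by blast+
  then show "gl_act A tA hA g W a \<in> carrier_mat (\<beta> (hA a)) (\<beta> (tA a))"
    using a Rep_carrier[OF W a] unfolding gl_act_def by auto
qed (use W in \<open>auto simp: gl_act_def Rep_def\<close>)

lemma SI_vanishes: "f \<in> SI V A tA hA \<beta> \<sigma> \<Longrightarrow> W \<notin> Rep A tA hA \<beta> \<Longrightarrow> f W = 0"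
  unfolding SI_def by blast

definition rep_path ::
  "'a set \<Rightarrow> ('a \<Rightarrow> 'v) \<Rightarrow> ('a \<Rightarrow> 'v) \<Rightarrow> ('v \<Rightarrow> nat) \<Rightarrow> ('k::field \<Rightarrow> 'a \<Rightarrow> 'k mat) \<Rightarrow> bool" where
  "rep_path A tA hA \<beta> X \<longleftrightarrow>
     (\<forall>s. X s \<in> Rep A tA hA \<beta>) \<and> (\<forall>a\<in>A. poly_path (\<beta> (hA a)) (\<beta> (tA a)) (\<lambda>s. X s a))"

lemma rep_path_const: "W \<in> Rep A tA hA \<beta> \<Longrightarrow> rep_path A tA hA \<beta> (\<lambda>_. W)"
  unfolding rep_path_def by (auto intro: poly_path_const Rep_carrier)

lemma SI_along_rep_path:
  assumes f: "f \<in> SI V A tA hA \<beta> \<sigma>" and X: "rep_path A tA hA \<beta> X"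
  shows "\<exists>P. \<forall>s. f (X s) = poly P s"
proof -
  from f obtain p where p: "p \<in> poly_funs (rep_coords A tA hA \<beta>)"
    and fp: "\<forall>W\<in>Rep A tA hA \<beta>. f W = p W"
    unfolding SI_def by auto
  have "\<exists>P. \<forall>s. p (X s) = poly P s"
    by (rule poly_funs_along_curve[OF p])
      (use X in \<open>auto simp: rep_coords_def rep_path_def poly_path_def\<close>)
  then show ?thesis using fp X unfolding rep_path_def by auto
qed

lemma SI_rep_path_eq:
  fixes f :: "('a \<Rightarrow> 'k::field_char_0 mat) \<Rightarrow> 'k"
  assumes f: "f \<in> SI V A tA hA \<beta> \<sigma>"
    and X: "rep_path A tA hA \<beta> X" and Y: "rep_path A tA hA \<beta> Y"
    and F: "finite F" and eq: "\<And>s. s \<notin> F \<Longrightarrow> f (X s) = f (Y s)"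
  shows "f (X s) = f (Y s)"
proof -
  obtain P Q where P: "\<forall>s. f (X s) = poly P s" and Q: "\<forall>s. f (Y s) = poly Q s"
    using SI_along_rep_path[OF f X] SI_along_rep_path[OF f Y] by blast
  show ?thesis using poly_eq_off_finite[OF F, of P Q s] P Q eq by metis
qed

(* Pulling a function on representations back along a map T, extended by zero off the
  representation space R (semi-invariants are by definition zero off Rep). *)
definition pullback ::
  "('b \<Rightarrow> 'k mat) set \<Rightarrow> (('b \<Rightarrow> 'k mat) \<Rightarrow> ('a \<Rightarrow> 'k mat)) \<Rightarrow> (('a \<Rightarrow> 'k mat) \<Rightarrow> 'k::zero)
     \<Rightarrow> ('b \<Rightarrow> 'k mat) \<Rightarrow> 'k" where
  "pullback R T f = (\<lambda>W. if W \<in> R then f (T W) else 0)"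

lemma SI_pullback:
  fixes f :: "('a \<Rightarrow> 'k::field mat) \<Rightarrow> 'k" and T :: "('b \<Rightarrow> 'k mat) \<Rightarrow> ('a \<Rightarrow> 'k mat)"
  assumes f: "f \<in> SI V A tA hA \<beta> \<sigma>"
    and Q': "quiver V' A' tA' hA'"
    and T_Rep: "\<And>W. W \<in> Rep A' tA' hA' \<beta>' \<Longrightarrow> T W \<in> Rep A tA hA \<beta>"
    and T_poly: "\<And>c. c \<in> rep_coords A tA hA \<beta> \<Longrightarrow>
      \<exists>q \<in> poly_funs (rep_coords A' tA' hA' \<beta>'). \<forall>W\<in>Rep A' tA' hA' \<beta>'. c (T W) = q W"
    and T_equiv: "\<And>g' W. g' \<in> GL V' \<beta>' \<Longrightarrow> W \<in> Rep A' tA' hA' \<beta>' \<Longrightarrow>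
      \<exists>g \<in> GL V \<beta>. weight_char V \<sigma> g = weight_char V' \<sigma>' g' \<and>
        f (T (gl_act A' tA' hA' g' W)) = f (gl_act A tA hA g (T W))"
  shows "pullback (Rep A' tA' hA' \<beta>') T f \<in> SI V' A' tA' hA' \<beta>' \<sigma>'"
proof -
  let ?R' = "Rep A' tA' hA' \<beta>'"
  from f obtain p where p: "p \<in> poly_funs (rep_coords A tA hA \<beta>)"
    and fp: "\<forall>W\<in>Rep A tA hA \<beta>. f W = p W"
    unfolding SI_def by auto
  obtain q where q: "q \<in> poly_funs (rep_coords A' tA' hA' \<beta>')" and pq: "\<forall>W\<in>?R'. p (T W) = q W"
    using poly_funs_subst[where T = T, OF p T_poly] by blast
  have poly: "\<forall>W\<in>?R'. pullback ?R' T f W = q W"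
    using fp pq T_Rep unfolding pullback_def by simp
  have equiv: "pullback ?R' T f (gl_act A' tA' hA' g' W)
      = inverse (weight_char V' \<sigma>' g') * pullback ?R' T f W"
    if g': "g' \<in> GL V' \<beta>'" and W: "W \<in> ?R'" for g' W
  proof -
    obtain g where g: "g \<in> GL V \<beta>" and wc: "weight_char V \<sigma> g = weight_char V' \<sigma>' g'"
      and fT: "f (T (gl_act A' tA' hA' g' W)) = f (gl_act A tA hA g (T W))"
      using T_equiv[OF g' W] by blast
    have "f (gl_act A tA hA g (T W)) = inverse (weight_char V \<sigma> g) * f (T W)"
      using f g T_Rep[OF W] unfolding SI_def by blast
    then show ?thesis
      using fT wc W gl_act_Rep[OF Q' g' W] unfolding pullback_def by simp
  qed
  show ?thesis unfolding SI_def
    using q poly equiv by (auto simp: pullback_def)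
qed

lemma lin_iso_pullbacks:
  assumes ST: "\<And>f. f \<in> S \<Longrightarrow> pullback R' T f \<in> S'"
    and TS: "\<And>F. F \<in> S' \<Longrightarrow> pullback R U F \<in> S"
    and inv1: "\<And>f. f \<in> S \<Longrightarrow> pullback R U (pullback R' T f) = f"
    and inv2: "\<And>F. F \<in> S' \<Longrightarrow> pullback R' T (pullback R U F) = F"
  shows "lin_iso S S'"
  unfolding lin_iso_def
proof (intro exI conjI ballI allI)
  show "bij_betw (pullback R' T) S S'"
    by (rule bij_betw_byWitness[where f' = "pullback R U"]) (use assms in auto)
  show "pullback R' T (\<lambda>x. c * f x + g x) = (\<lambda>y. c * pullback R' T f y + pullback R' T g y)"
    for f g c by (auto simp: pullback_def)
qed

lemma lin_iso_trans [trans]: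
  assumes "lin_iso S T" "lin_iso T U"
  shows "lin_iso S U"
proof -
  from assms obtain \<phi>1 \<phi>2 where b1: "bij_betw \<phi>1 S T" and b2: "bij_betw \<phi>2 T U"
    and l1: "\<forall>f\<in>S. \<forall>g\<in>S. \<forall>c. \<phi>1 (\<lambda>x. c * f x + g x) = (\<lambda>y. c * \<phi>1 f y + \<phi>1 g y)"
    and l2: "\<forall>f\<in>T. \<forall>g\<in>T. \<forall>c. \<phi>2 (\<lambda>x. c * f x + g x) = (\<lambda>y. c * \<phi>2 f y + \<phi>2 g y)"
    unfolding lin_iso_def by blast
  have "\<phi>1 f \<in> T" if "f \<in> S" for f using b1 that by (auto simp: bij_betw_def)
  then have "\<forall>f\<in>S. \<forall>g\<in>S. \<forall>c. (\<phi>2 \<circ> \<phi>1) (\<lambda>x. c * f x + g x) =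
      (\<lambda>y. c * (\<phi>2 \<circ> \<phi>1) f y + (\<phi>2 \<circ> \<phi>1) g y)"
    using l1 l2 by simp
  with bij_betw_trans[OF b1 b2] show ?thesis unfolding lin_iso_def by blast
qed

(* Duality: transposing every matrix turns a representation of Q into one of the opposite
  quiver, intertwining the action of g with that of its contragredient (g^-1)^T; the
  character \<sigma> becomes -\<sigma>. *)
definition transpose_rep :: "('a \<Rightarrow> 'k mat) \<Rightarrow> ('a \<Rightarrow> 'k mat)" where
  "transpose_rep W = (\<lambda>a. transpose_mat (W a))"

definition contragredient :: "'v set \<Rightarrow> ('v \<Rightarrow> 'k::field mat) \<Rightarrow> 'v \<Rightarrow> 'k mat" where
  "contragredient V g = (\<lambda>x. if x \<in> V then transpose_mat (mat_inv (g x)) else 1\<^sub>m 0)"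

lemma transpose_rep_involution [simp]: "transpose_rep (transpose_rep W) = W"
  unfolding transpose_rep_def by simp

lemma transpose_rep_Rep: "W \<in> Rep A tA hA \<beta> \<Longrightarrow> transpose_rep W \<in> Rep A hA tA \<beta>"
  unfolding Rep_def transpose_rep_def by (auto intro!: eq_matI)

lemma contragredient_props:
  fixes g :: "'v \<Rightarrow> 'k::field mat"
  assumes g: "g \<in> GL V \<beta>" and x: "x \<in> V"
  shows "contragredient V g x \<in> carrier_mat (\<beta> x) (\<beta> x)"
    and "mat_inv (contragredient V g x) = transpose_mat (g x)"
    and "det (contragredient V g x) = inverse (det (g x))"
proof -
  have G: "g x \<in> carrier_mat (\<beta> x) (\<beta> x)" "det (g x) \<noteq> 0" using GL_carrier[OF g x] by auto
  note I = mat_inv_props[OF G]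
  show "contragredient V g x \<in> carrier_mat (\<beta> x) (\<beta> x)"
    using I x unfolding contragredient_def by auto
  have "transpose_mat (mat_inv (g x)) * transpose_mat (g x) = transpose_mat (g x * mat_inv (g x))"
    "transpose_mat (g x) * transpose_mat (mat_inv (g x)) = transpose_mat (mat_inv (g x) * g x)"
    using transpose_mult[OF G(1) I(1)] transpose_mult[OF I(1) G(1)] by simp_all
  then have "transpose_mat (mat_inv (g x)) * transpose_mat (g x) = 1\<^sub>m (\<beta> x)"
    "transpose_mat (g x) * transpose_mat (mat_inv (g x)) = 1\<^sub>m (\<beta> x)"
    using I(2,3) by (simp_all only: transpose_one)
  then have "mat_inv (transpose_mat (mat_inv (g x))) = transpose_mat (g x)"
    using I(1) G(1) by (intro mat_inv_unique[of _ "\<beta> x"]) auto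
  then show "mat_inv (contragredient V g x) = transpose_mat (g x)"
    using x unfolding contragredient_def by simp
  have "det (g x) * det (mat_inv (g x)) = 1" using det_mult[OF G(1) I(1)] I(2) by simp
  then have "det (mat_inv (g x)) = inverse (det (g x))" using G(2) by (simp add: inverse_unique)
  then show "det (contragredient V g x) = inverse (det (g x))"
    using x det_transpose[OF I(1)] unfolding contragredient_def by simp
qed

lemma contragredient_GL:
  assumes g: "g \<in> GL V \<beta>"
  shows "contragredient V g \<in> GL V \<beta>"
proof -
  have "contragredient V g x \<in> carrier_mat (\<beta> x) (\<beta> x) \<and> det (contragredient V g x) \<noteq> 0"
    if x: "x \<in> V" for x
    using contragredient_props[OF g x] GL_carrier[OF g x] by simp
  then show ?thesis unfolding GL_def by (simp add: contragredient_def)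
qed

lemma weight_contragredient:
  assumes g: "g \<in> GL V \<beta>"
  shows "weight_char V \<sigma> (contragredient V g) = weight_char V (-\<sigma>) g"
  unfolding weight_char_def
proof (rule prod.cong)
  fix x assume "x \<in> V"
  then show "det (contragredient V g x) powi \<sigma> x = det (g x) powi (- \<sigma>) x"
    by (simp add: contragredient_props(3)[OF g] power_int_inverse power_int_minus)
qed simp

lemma transpose_rep_act:
  fixes W :: "'a \<Rightarrow> 'k::field mat"
  assumes Q: "quiver V A tA hA" and g: "g \<in> GL V \<beta>" and W: "W \<in> Rep A hA tA \<beta>"
  shows "transpose_rep (gl_act A hA tA g W) = gl_act A tA hA (contragredient V g) (transpose_rep W)"
proof
  fix a
  show "transpose_rep (gl_act A hA tA g W) a = gl_act A tA hA (contragredient V g) (transpose_rep W) a"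
  proof (cases "a \<in> A")
    case a: True
    then have t: "tA a \<in> V" and h: "hA a \<in> V" using Q unfolding quiver_def by auto
    have Gt: "g (tA a) \<in> carrier_mat (\<beta> (tA a)) (\<beta> (tA a))" using GL_carrier[OF g t] by auto
    have Ih: "mat_inv (g (hA a)) \<in> carrier_mat (\<beta> (hA a)) (\<beta> (hA a))"
      using GL_carrier[OF g h] mat_inv_props by blast
    have Wa: "W a \<in> carrier_mat (\<beta> (tA a)) (\<beta> (hA a))" using Rep_carrier[OF W a] .
    have GW: "g (tA a) * W a \<in> carrier_mat (\<beta> (tA a)) (\<beta> (hA a))" using Gt Wa by auto
    have "transpose_mat (g (tA a) * W a * mat_inv (g (hA a)))
        = transpose_mat (mat_inv (g (hA a))) * (transpose_mat (W a) * transpose_mat (g (tA a)))"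
      using transpose_mult[OF GW Ih] transpose_mult[OF Gt Wa] by simp
    also have "\<dots> = transpose_mat (mat_inv (g (hA a))) * transpose_mat (W a) * transpose_mat (g (tA a))"
      using Gt Wa Ih by (simp add: assoc_mult_mat[of _ "\<beta> (hA a)" "\<beta> (hA a)"])
    finally have "transpose_mat (g (tA a) * W a * mat_inv (g (hA a)))
        = transpose_mat (mat_inv (g (hA a))) * transpose_mat (W a) * transpose_mat (g (tA a))" .
    then show ?thesis
      using a h contragredient_props(2)[OF g t]
      unfolding transpose_rep_def gl_act_def contragredient_def by simp
  qed (simp add: transpose_rep_def gl_act_def)
qed

lemma SI_transpose:
  fixes f :: "('a \<Rightarrow> 'k::field mat) \<Rightarrow> 'k" and V :: "'v set"
  assumes Q: "quiver V A tA hA" and f: "f \<in> SI V A tA hA \<beta> \<sigma>"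
  shows "pullback (Rep A hA tA \<beta>) transpose_rep f \<in> SI V A hA tA \<beta> (-\<sigma>)"
proof (rule SI_pullback[OF f])
  show "quiver V A hA tA" using Q unfolding quiver_def by auto
  show "transpose_rep W \<in> Rep A tA hA \<beta>" if "W \<in> Rep A hA tA \<beta>" for W
    using transpose_rep_Rep[OF that] .
next
  fix c assume "c \<in> rep_coords A tA hA \<beta>"
  then obtain a i j where c: "c = (\<lambda>W. W a $$ (i, j))" and a: "a \<in> A"
    and ij: "i < \<beta> (hA a)" "j < \<beta> (tA a)" unfolding rep_coords_def by auto
  have "(\<lambda>W. W a $$ (j, i)) \<in> rep_coords A hA tA \<beta>"
    using rep_coordsI[of a A j \<beta> tA i hA] a ij by simp
  then have "(\<lambda>W. W a $$ (j, i)) \<in> poly_funs (rep_coords A hA tA \<beta>)"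
    by (rule poly_funs.pf_coord)
  moreover have "c (transpose_rep W) = W a $$ (j, i)" if "W \<in> Rep A hA tA \<beta>" for W
    using ij Rep_carrier[OF that a] by (simp add: c transpose_rep_def)
  ultimately show "\<exists>q\<in>poly_funs (rep_coords A hA tA \<beta>). \<forall>W\<in>Rep A hA tA \<beta>. c (transpose_rep W) = q W"
    by (intro bexI[of _ "\<lambda>W. W a $$ (j, i)"]) auto
next
  fix g :: "'v \<Rightarrow> 'k mat" and W :: "'a \<Rightarrow> 'k mat"
  assume g: "g \<in> GL V \<beta>" and W: "W \<in> Rep A hA tA \<beta>"
  show "\<exists>g'\<in>GL V \<beta>. weight_char V \<sigma> g' = weight_char V (-\<sigma>) g \<and>
      f (transpose_rep (gl_act A hA tA g W)) = f (gl_act A tA hA g' (transpose_rep W))"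
    using contragredient_GL[OF g] weight_contragredient[OF g] transpose_rep_act[OF Q g W]
    by (intro bexI[of _ "contragredient V g"] conjI) simp_all
qed

lemma lin_iso_opposite:
  assumes Q: "quiver V A tA hA"
  shows "lin_iso (SI V A tA hA \<beta> \<sigma> :: (('a \<Rightarrow> 'k::field mat) \<Rightarrow> 'k) set) (SI V A hA tA \<beta> (-\<sigma>))"
proof (rule lin_iso_pullbacks)
  have Qop: "quiver V A hA tA" using Q unfolding quiver_def by auto
  show "pullback (Rep A hA tA \<beta>) transpose_rep f \<in> SI V A hA tA \<beta> (-\<sigma>)"
    if "f \<in> SI V A tA hA \<beta> \<sigma>" for f :: "('a \<Rightarrow> 'k mat) \<Rightarrow> 'k"
    by (rule SI_transpose[OF Q that])
  show "pullback (Rep A tA hA \<beta>) transpose_rep F \<in> SI V A tA hA \<beta> \<sigma>"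
    if "F \<in> SI V A hA tA \<beta> (-\<sigma>)" for F :: "('a \<Rightarrow> 'k mat) \<Rightarrow> 'k"
    using SI_transpose[OF Qop that] by (simp add: fun_Compl_def)
  have inverse: "pullback (Rep A' tA' hA' \<beta>) transpose_rep (pullback (Rep A' hA' tA' \<beta>) transpose_rep f) = f"
    if "f \<in> SI V' A' tA' hA' \<beta> \<sigma>'" for f :: "('a \<Rightarrow> 'k mat) \<Rightarrow> 'k" and V' A' tA' hA' \<sigma>'
    using that transpose_rep_Rep[of _ A' tA' hA' \<beta>] unfolding pullback_def SI_def by fastforce
  show "pullback (Rep A tA hA \<beta>) transpose_rep (pullback (Rep A hA tA \<beta>) transpose_rep f) = f"
    if "f \<in> SI V A tA hA \<beta> \<sigma>" for f :: "('a \<Rightarrow> 'k mat) \<Rightarrow> 'k"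
    using inverse[OF that] .
  show "pullback (Rep A hA tA \<beta>) transpose_rep (pullback (Rep A tA hA \<beta>) transpose_rep F) = F"
    if "F \<in> SI V A hA tA \<beta> (-\<sigma>)" for F :: "('a \<Rightarrow> 'k mat) \<Rightarrow> 'k"
    using inverse[OF that] .
qed

(* The contraction situation: v0 has b : v0 \<rightarrow> w = hA b (w \<noteq> v0) as its only outgoing arrow,
   \<beta>(w) \<le> \<beta>(v0) and \<sigma>(v0) = 0. The contracted quiver has vertices V - {v0} and arrows
   A - {b}; an arrow a into v0 is redirected to w and stands for the composite b a. *)
locale vertex_contraction =
  fixes V :: "'v set" and A :: "'a set" and tA hA :: "'a \<Rightarrow> 'v"
    and \<beta> :: "'v \<Rightarrow> nat" and \<sigma> :: "'v \<Rightarrow> int" and v0 :: 'v and b :: 'a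
  assumes quiver: "quiver V A tA hA"
    and v0: "v0 \<in> V" and b: "b \<in> A" and sigma0: "\<sigma> v0 = 0"
    and tail_b: "tA b = v0" and out_v0: "{a \<in> A. tA a = v0} = {b}"
    and head_b: "hA b \<noteq> v0" and dim_le: "\<beta> (hA b) \<le> \<beta> v0"
begin

abbreviation hA' :: "'a \<Rightarrow> 'v" where
  "hA' \<equiv> \<lambda>a. if hA a = v0 then hA b else hA a"

lemma tail_in: "a \<in> A \<Longrightarrow> tA a \<in> V" and head_in: "a \<in> A \<Longrightarrow> hA a \<in> V"
  using quiver unfolding quiver_def by auto

lemma tail_ne_v0: "a \<in> A \<Longrightarrow> a \<noteq> b \<Longrightarrow> tA a \<noteq> v0"
  using out_v0 by auto

lemma into_v0: "a \<in> A \<Longrightarrow> hA a = v0 \<Longrightarrow> a \<noteq> b \<and> tA a \<noteq> v0"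
  using head_b tail_ne_v0 by blast

lemma quiver_contracted: "quiver (V - {v0}) (A - {b}) tA hA'"
  using quiver head_in[OF b] head_b tail_ne_v0 unfolding quiver_def by auto

(* Replace the matrix on b by X and multiply every arrow into v0 on the left by M. The action
   of GL(\<beta>(v0)) and the embedding of the contracted representation space are of this form. *)
definition modify_v0 :: "'k::field mat \<Rightarrow> 'k mat \<Rightarrow> ('a \<Rightarrow> 'k mat) \<Rightarrow> ('a \<Rightarrow> 'k mat)" where
  "modify_v0 X M W = (\<lambda>a. if a = b then X else if a \<in> A \<and> hA a = v0 then M * W a else W a)"

definition contract :: "('a \<Rightarrow> 'k::field mat) \<Rightarrow> ('a \<Rightarrow> 'k mat)" where
  "contract W = (\<lambda>a. if a \<in> A \<and> hA a = v0 then W b * W a else if a = b then 0\<^sub>m 0 0 else W a)"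

abbreviation E :: "'k::field mat" where
  "E \<equiv> trunc_mat (\<beta> (hA b)) (\<beta> v0)"

definition expand :: "('a \<Rightarrow> 'k::field mat) \<Rightarrow> ('a \<Rightarrow> 'k mat)" where
  "expand = modify_v0 E (transpose_mat E)"

lemma modify_v0_at_b [simp]: "modify_v0 X M W b = X"
  by (simp add: modify_v0_def)

(* modify_v0 lands in Rep(Q,beta) when the sizes fit; the general form, where the arrows into
   v0 may have height r, also covers the section, whose input has height beta(w) there. *)
lemma modify_v0_Rep:
  fixes X M :: "'k::field mat"
  assumes X: "X \<in> carrier_mat (\<beta> (hA b)) (\<beta> v0)" and M: "M \<in> carrier_mat (\<beta> v0) r"
    and W_into: "\<And>a. a \<in> A \<Longrightarrow> hA a = v0 \<Longrightarrow> W a \<in> carrier_mat r (\<beta> (tA a))"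
    and W_other: "\<And>a. a \<in> A \<Longrightarrow> a \<noteq> b \<Longrightarrow> hA a \<noteq> v0 \<Longrightarrow> W a \<in> carrier_mat (\<beta> (hA a)) (\<beta> (tA a))"
    and W_out: "\<And>a. a \<notin> A \<Longrightarrow> W a = 0\<^sub>m 0 0"
  shows "modify_v0 X M W \<in> Rep A tA hA \<beta>"
proof (rule RepI)
  fix a assume a: "a \<in> A"
  show "modify_v0 X M W a \<in> carrier_mat (\<beta> (hA a)) (\<beta> (tA a))"
  proof (cases "hA a = v0")
    case True
    then show ?thesis using a into_v0 M W_into[OF a] unfolding modify_v0_def by auto
  qed (use a X W_other tail_b in \<open>auto simp: modify_v0_def\<close>)
qed (use W_out b in \<open>auto simp: modify_v0_def\<close>)

lemma modify_v0_Rep':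
  fixes W :: "'a \<Rightarrow> 'k::field mat"
  assumes "W \<in> Rep A tA hA \<beta>"
    and "X \<in> carrier_mat (\<beta> (hA b)) (\<beta> v0)" and "M \<in> carrier_mat (\<beta> v0) (\<beta> v0)"
  shows "modify_v0 X M W \<in> Rep A tA hA \<beta>"
  using assms by (intro modify_v0_Rep) (auto dest: Rep_carrier Rep_outside)

lemma expand_Rep:
  fixes W :: "'a \<Rightarrow> 'k::field mat"
  assumes W: "W \<in> Rep (A - {b}) tA hA' \<beta>"
  shows "expand W \<in> Rep A tA hA \<beta>"
  unfolding expand_def
proof (rule modify_v0_Rep[of _ _ "\<beta> (hA b)"])
  fix a assume "a \<in> A" "hA a = v0"
  then show "W a \<in> carrier_mat (\<beta> (hA b)) (\<beta> (tA a))"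
    using Rep_carrier[OF W, of a] into_v0 by auto
next
  fix a assume "a \<in> A" "a \<noteq> b" "hA a \<noteq> v0"
  then show "W a \<in> carrier_mat (\<beta> (hA a)) (\<beta> (tA a))"
    using Rep_carrier[OF W, of a] by auto
qed (use Rep_outside[OF W] in auto)

lemma contract_Rep:
  fixes W :: "'a \<Rightarrow> 'k::field mat"
  assumes W: "W \<in> Rep A tA hA \<beta>"
  shows "contract W \<in> Rep (A - {b}) tA hA' \<beta>"
proof (rule RepI)
  fix a assume a: "a \<in> A - {b}"
  show "contract W a \<in> carrier_mat (\<beta> (hA' a)) (\<beta> (tA a))"
  proof (cases "hA a = v0")
    case True
    have Wb: "W b \<in> carrier_mat (\<beta> (hA b)) (\<beta> v0)" using Rep_carrier[OF W b] tail_b by simp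
    have Wa: "W a \<in> carrier_mat (\<beta> v0) (\<beta> (tA a))" using Rep_carrier[OF W, of a] a True by simp
    show ?thesis using mult_carrier_mat[OF Wb Wa] a True by (simp add: contract_def)
  next
    case False
    then show ?thesis using a Rep_carrier[OF W, of a] by (simp add: contract_def)
  qed
next
  fix a assume "a \<notin> A - {b}"
  then consider "a = b" | "a \<notin> A" by blast
  then show "contract W a = 0\<^sub>m 0 0"
    by cases (simp_all add: contract_def head_b Rep_outside[OF W])
qed

(* The contraction map is a left inverse of its section, since E E^T = I. *)
lemma contract_expand:
  fixes W :: "'a \<Rightarrow> 'k::field mat"
  assumes W: "W \<in> Rep (A - {b}) tA hA' \<beta>"
  shows "contract (expand W) = W"
proof
  fix a
  show "contract (expand W) a = W a"
  proof (cases "a \<in> A \<and> hA a = v0")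
    case True
    then have Wa: "W a \<in> carrier_mat (\<beta> (hA b)) (\<beta> (tA a))"
      using Rep_carrier[OF W, of a] into_v0 by auto
    have "E * (transpose_mat E * W a) = (E * transpose_mat E) * W a"
      using assoc_mult_mat[OF trunc_mat_carrier(1) trunc_mat_carrier(2) Wa] by simp
    also have "\<dots> = W a" using trunc_mat_transpose[OF dim_le, where 'k = 'k] Wa by simp
    finally have "E * (transpose_mat E * W a) = W a" .
    then show ?thesis
      using True into_v0 by (simp add: contract_def expand_def modify_v0_def)
  qed (use W head_b b Rep_outside[OF W, of b] in \<open>auto simp: contract_def expand_def modify_v0_def\<close>)
qed

lemma expand_contract:
  fixes W :: "'a \<Rightarrow> 'k::field mat"
  assumes W: "W \<in> Rep A tA hA \<beta>"
  shows "expand (contract W) = modify_v0 E (transpose_mat E * W b) W"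
proof
  fix a
  show "expand (contract W) a = modify_v0 E (transpose_mat E * W b) W a"
  proof (cases "a \<in> A \<and> hA a = v0")
    case True
    then have Wa: "W a \<in> carrier_mat (\<beta> v0) (\<beta> (tA a))" using Rep_carrier[OF W] by force
    have "transpose_mat E * (W b * W a) = transpose_mat E * W b * W a"
      using assoc_mult_mat[OF trunc_mat_carrier(2) _ Wa, of "W b"] Rep_carrier[OF W b] tail_b
      by simp
    then show ?thesis using True into_v0 by (simp add: contract_def expand_def modify_v0_def)
  qed (auto simp: contract_def expand_def modify_v0_def)
qed

lemma modify_v0_comp:
  fixes W :: "'a \<Rightarrow> 'k::field mat"
  assumes W: "W \<in> Rep A tA hA \<beta>"
    and M: "M \<in> carrier_mat (\<beta> v0) (\<beta> v0)" and M': "M' \<in> carrier_mat (\<beta> v0) (\<beta> v0)"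
  shows "modify_v0 X M (modify_v0 X' M' W) = modify_v0 X (M * M') W"
proof
  fix a
  show "modify_v0 X M (modify_v0 X' M' W) a = modify_v0 X (M * M') W a"
    using M M' Rep_carrier[OF W, of a] into_v0[of a]
    by (auto simp: modify_v0_def assoc_mult_mat[of _ "\<beta> v0" "\<beta> v0"])
qed

lemma modify_v0_self:
  fixes W :: "'a \<Rightarrow> 'k::field mat"
  assumes W: "W \<in> Rep A tA hA \<beta>"
  shows "modify_v0 (W b) (1\<^sub>m (\<beta> v0)) W = W"
proof
  fix a
  show "modify_v0 (W b) (1\<^sub>m (\<beta> v0)) W a = W a"
    using Rep_carrier[OF W, of a] by (auto simp: modify_v0_def)
qed

(* The element of GL(\<beta>) that is M at v0 and the identity elsewhere; as \<sigma>(v0) = 0 it has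
   character value 1, and it acts through modify_v0. *)
definition gl_at_v0 :: "'k::field mat \<Rightarrow> 'v \<Rightarrow> 'k mat" where
  "gl_at_v0 M = (\<lambda>x. if x = v0 then M else if x \<in> V then 1\<^sub>m (\<beta> x) else 1\<^sub>m 0)"

lemma gl_act_at_v0:
  fixes W :: "'a \<Rightarrow> 'k::field mat"
  assumes W: "W \<in> Rep A tA hA \<beta>" and M: "M \<in> carrier_mat (\<beta> v0) (\<beta> v0)"
  shows "gl_act A tA hA (gl_at_v0 M) W = modify_v0 (W b * mat_inv M) M W"
proof
  fix a
  show "gl_act A tA hA (gl_at_v0 M) W a = modify_v0 (W b * mat_inv M) M W a"
  proof (cases "a \<in> A")
    case a: True
    have Wa: "W a \<in> carrier_mat (\<beta> (hA a)) (\<beta> (tA a))" by (rule Rep_carrier[OF W a])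
    consider "a = b" | "a \<noteq> b" "hA a = v0" | "a \<noteq> b" "hA a \<noteq> v0" by blast
    then show ?thesis
    proof cases
      case 1
      then show ?thesis using b Wa head_b head_in tail_b
        by (simp add: gl_act_def gl_at_v0_def modify_v0_def)
    next
      case 2
      then show ?thesis using a Wa M tail_ne_v0 tail_in
        by (simp add: gl_act_def gl_at_v0_def modify_v0_def)
    next
      case 3
      then show ?thesis using a Wa tail_ne_v0 tail_in head_in
        by (simp add: gl_act_def gl_at_v0_def modify_v0_def)
    qed
  qed (use b in \<open>auto simp: gl_act_def modify_v0_def\<close>)
qed

lemma SI_modify_v0:
  fixes f :: "('a \<Rightarrow> 'k::field mat) \<Rightarrow> 'k"
  assumes f: "f \<in> SI V A tA hA \<beta> \<sigma>" and W: "W \<in> Rep A tA hA \<beta>"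
    and M: "M \<in> carrier_mat (\<beta> v0) (\<beta> v0)" and dM: "det M \<noteq> 0"
  shows "f (modify_v0 (W b * mat_inv M) M W) = f W"
proof -
  have g: "gl_at_v0 M \<in> GL V \<beta>" using v0 M dM unfolding gl_at_v0_def GL_def by auto
  have "weight_char V \<sigma> (gl_at_v0 M) = 1"
    unfolding weight_char_def gl_at_v0_def by (rule prod.neutral) (auto simp: sigma0)
  moreover have "f (gl_act A tA hA (gl_at_v0 M) W) = inverse (weight_char V \<sigma> (gl_at_v0 M)) * f W"
    using f g W unfolding SI_def by blast
  ultimately show ?thesis using gl_act_at_v0[OF W M] by simp
qed

lemma modify_v0_rep_path:
  fixes W :: "'a \<Rightarrow> 'k::field mat"
  assumes W: "W \<in> Rep A tA hA \<beta>"
    and X: "poly_path (\<beta> (hA b)) (\<beta> v0) X" and M: "poly_path (\<beta> v0) (\<beta> v0) M"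
  shows "rep_path A tA hA \<beta> (\<lambda>s. modify_v0 (X s) (M s) W)"
  unfolding rep_path_def
proof (intro conjI allI ballI)
  show "modify_v0 (X s) (M s) W \<in> Rep A tA hA \<beta>" for s
    using X M by (intro modify_v0_Rep'[OF W]) (auto simp: poly_path_def)
  fix a assume a: "a \<in> A"
  have "poly_path (\<beta> v0) (\<beta> (tA a)) (\<lambda>s. M s * W a)" if "hA a = v0"
    using poly_path_mult[OF M, of "\<beta> (tA a)" "\<lambda>_. W a"] poly_path_const[OF Rep_carrier[OF W a]] that
    by simp
  moreover have "poly_path (\<beta> (hA a)) (\<beta> (tA a)) (\<lambda>s. X s)" if "a = b"
    using X that tail_b by simp
  ultimately show "poly_path (\<beta> (hA a)) (\<beta> (tA a)) (\<lambda>s. modify_v0 (X s) (M s) W a)"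
    using poly_path_const[OF Rep_carrier[OF W a]] a
    by (cases "a = b"; cases "hA a = v0") (simp_all add: modify_v0_def)
qed


(* First specialisation: once b carries E = (I 0), a semi-invariant does not see the rows of
   the arrows into v0 beyond the first \<beta>(w). Scaling those rows by t \<noteq> 0 is the action of
   an element of GL(\<beta>(v0)) fixing E, and the value at t = 0 follows by polynomiality. *)
lemma SI_tail_scale_zero:
  fixes f :: "('a \<Rightarrow> 'k::field_char_0 mat) \<Rightarrow> 'k"
  assumes f: "f \<in> SI V A tA hA \<beta> \<sigma>" and W: "W \<in> Rep A tA hA \<beta>"
    and M: "M \<in> carrier_mat (\<beta> v0) (\<beta> v0)"
  shows "f (modify_v0 E (tail_scale_mat (\<beta> (hA b)) (\<beta> v0) 0 * M) W) = f (modify_v0 E M W)"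
proof -
  let ?D = "tail_scale_mat (\<beta> (hA b)) (\<beta> v0) :: 'k \<Rightarrow> 'k mat"
  have WE: "modify_v0 E M W \<in> Rep A tA hA \<beta>"
    using modify_v0_Rep'[OF W trunc_mat_carrier(1) M] .
  have scaled: "f (modify_v0 E (?D t * M) W) = f (modify_v0 E M W)" if t: "t \<noteq> 0" for t
  proof -
    have "E * mat_inv (?D t) = E"
      using tail_scale_invertible(2)[OF t] trunc_mat_tail_scale[OF dim_le, where 'k = 'k] by simp
    then have "modify_v0 (modify_v0 E M W b * mat_inv (?D t)) (?D t) (modify_v0 E M W)
        = modify_v0 E (?D t * M) W"
      using modify_v0_comp[OF W tail_scale_mat_carrier M] by simp
    then show ?thesis
      using SI_modify_v0[OF f WE tail_scale_mat_carrier[of "\<beta> (hA b)"] tail_scale_invertible(1)[OF t]]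
      by simp
  qed
  have "rep_path A tA hA \<beta> (\<lambda>t. modify_v0 E (?D t * M) W)"
    using modify_v0_rep_path[OF W poly_path_const[OF trunc_mat_carrier(1)]
        poly_path_mult[OF poly_path_tail_scale poly_path_const[OF M]]] .
  from SI_rep_path_eq[OF f this rep_path_const[OF WE], of "{0}"] scaled
  show ?thesis by simp
qed

(* With B = W(b) and
   H(s) = E^T B + s I we have E H(s) = B + s E, so for all but finitely many s with H(s)
   invertible, acting by H(s) at v0 moves W(b) = B + s E to E; the previous lemma then
   replaces H(s) by P H(s), P = diag(I, 0). Both sides are polynomial in s, and at s = 0
   the right-hand side is the expansion of the contraction of W. *)
lemma SI_expand_contract:
  fixes f :: "('a \<Rightarrow> 'k::field_char_0 mat) \<Rightarrow> 'k"
  assumes f: "f \<in> SI V A tA hA \<beta> \<sigma>" and W: "W \<in> Rep A tA hA \<beta>"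
  shows "f (expand (contract W)) = f W"
proof -
  let ?m = "\<beta> (hA b)" and ?n = "\<beta> v0"
  let ?E = "E :: 'k mat" and ?P = "tail_scale_mat (\<beta> (hA b)) (\<beta> v0) 0 :: 'k mat"
  define B where "B = W b"
  define K where "K = transpose_mat ?E * B"
  define H where "H s = K + s \<cdot>\<^sub>m 1\<^sub>m ?n" for s
  have Ec: "?E \<in> carrier_mat ?m ?n" "transpose_mat ?E \<in> carrier_mat ?n ?m" by simp_all
  have B: "B \<in> carrier_mat ?m ?n" using Rep_carrier[OF W b] tail_b by (simp add: B_def)
  have K: "K \<in> carrier_mat ?n ?n" using mult_carrier_mat[OF Ec(2) B] by (simp add: K_def)
  have H: "H s \<in> carrier_mat ?n ?n" for s using K by (simp add: H_def)
  have "?E * K = (?E * transpose_mat ?E) * B" using assoc_mult_mat[OF Ec B] by (simp add: K_def)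
  also have "\<dots> = B" using trunc_mat_transpose[OF dim_le, where 'k = 'k] B by simp
  finally have EK: "?E * K = B" .
  have EH: "?E * H s = B + s \<cdot>\<^sub>m ?E" for s
  proof -
    have "?E * H s = ?E * K + ?E * (s \<cdot>\<^sub>m 1\<^sub>m ?n)"
      using mult_add_distrib_mat[OF Ec(1) K] by (simp add: H_def)
    also have "?E * (s \<cdot>\<^sub>m 1\<^sub>m ?n) = s \<cdot>\<^sub>m ?E"
      using mult_smult_distrib[OF Ec(1) one_carrier_mat[of ?n]] Ec(1) by simp
    finally show ?thesis using EK by simp
  qed
  let ?X = "\<lambda>s. modify_v0 (B + s \<cdot>\<^sub>m ?E) (1\<^sub>m ?n) W"
  let ?Y = "\<lambda>s. modify_v0 ?E (?P * H s) W"
  have on_line: "f (?X s) = f (?Y s)" if d: "det (H s) \<noteq> 0" for s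
  proof -
    note inv = mat_inv_props[OF H d]
    have "(B + s \<cdot>\<^sub>m ?E) * mat_inv (H s) = ?E"
      using EH[of s, symmetric] assoc_mult_mat[OF Ec(1) H inv(1)] inv(2) right_mult_one_mat[OF Ec(1)]
      by simp
    then have "modify_v0 (?X s b * mat_inv (H s)) (H s) (?X s) = modify_v0 ?E (H s) W"
      using modify_v0_comp[OF W H one_carrier_mat] right_mult_one_mat[OF H] by simp
    moreover have "?X s \<in> Rep A tA hA \<beta>"
      using B by (intro modify_v0_Rep'[OF W]) auto
    ultimately have "f (modify_v0 ?E (H s) W) = f (?X s)"
      using SI_modify_v0[OF f _ H d] by metis
    then show ?thesis using SI_tail_scale_zero[OF f W H] by simp
  qed
  have X: "rep_path A tA hA \<beta> ?X"
    using modify_v0_rep_path[OF W poly_path_affine[OF B trunc_mat_carrier(1)] poly_path_const[OF one_carrier_mat]] .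
  have Y: "rep_path A tA hA \<beta> ?Y"
    using modify_v0_rep_path[OF W poly_path_const[OF trunc_mat_carrier(1)]
        poly_path_mult[OF poly_path_const[OF tail_scale_mat_carrier] poly_path_affine[OF K one_carrier_mat]]]
    unfolding H_def .
  have "finite {s. det (H s) = 0}" using det_shift_cofinite[OF K] by (simp add: H_def)
  then have "f (?X 0) = f (?Y 0)"
    by (rule SI_rep_path_eq[OF f X Y]) (use on_line in simp)
  moreover have "B + 0 \<cdot>\<^sub>m ?E = B" using B Ec by (intro eq_matI) auto
  then have "?X 0 = W" using modify_v0_self[OF W] by (simp add: B_def)
  moreover have "H 0 = K" using K by (intro eq_matI) (auto simp: H_def)
  then have "?P * H 0 = transpose_mat ?E * W b"
    using assoc_mult_mat[OF tail_scale_mat_carrier Ec(2) B, symmetric]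
      tail_scale_zero_transpose[where 'k = 'k] by (simp add: K_def B_def)
  ultimately show ?thesis using expand_contract[OF W] by simp
qed


(* The contraction map intertwines the action of g \<in> GL(\<beta>) with that of its restriction to
   V - {v0}; in a composite W(b) W(a) the factors g(v0) and g(v0)^-1 cancel. *)
lemma contract_equivariant:
  fixes W :: "'a \<Rightarrow> 'k::field mat"
  assumes g: "g \<in> GL V \<beta>" and W: "W \<in> Rep A tA hA \<beta>"
  shows "contract (gl_act A tA hA g W) = gl_act (A - {b}) tA hA' (g(v0 := 1\<^sub>m 0)) (contract W)"
proof
  fix a
  show "contract (gl_act A tA hA g W) a = gl_act (A - {b}) tA hA' (g(v0 := 1\<^sub>m 0)) (contract W) a"
  proof (cases "a \<in> A \<and> a \<noteq> b")
    case False
    then consider "a = b" | "a \<notin> A" by blast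
    then show ?thesis by cases (simp_all add: b head_b contract_def gl_act_def)
  next
    case True
    then have a: "a \<in> A" "a \<noteq> b" and ta: "tA a \<noteq> v0" using tail_ne_v0 by auto
    have Ia: "mat_inv (g (tA a)) \<in> carrier_mat (\<beta> (tA a)) (\<beta> (tA a))"
      using GL_carrier[OF g tail_in[OF a(1)]] mat_inv_props by blast
    show ?thesis
    proof (cases "hA a = v0")
      case True
      have gv: "g v0 \<in> carrier_mat (\<beta> v0) (\<beta> v0)" "det (g v0) \<noteq> 0" using GL_carrier[OF g v0] by auto
      have gw: "g (hA b) \<in> carrier_mat (\<beta> (hA b)) (\<beta> (hA b))" using GL_carrier[OF g head_in[OF b]] by auto
      have Wb: "W b \<in> carrier_mat (\<beta> (hA b)) (\<beta> v0)" using Rep_carrier[OF W b] tail_b by simp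
      have Wa: "W a \<in> carrier_mat (\<beta> v0) (\<beta> (tA a))" using Rep_carrier[OF W a(1)] True by simp
      have "(g (hA b) * W b * mat_inv (g v0)) * (g v0 * W a * mat_inv (g (tA a)))
          = g (hA b) * (W b * W a) * mat_inv (g (tA a))"
        using mult_cancel_inner[OF gw Wb mat_inv_props(1)[OF gv] gv(1) mat_inv_props(3)[OF gv] Wa Ia] .
      then show ?thesis using a True ta b tail_b head_b by (simp add: contract_def gl_act_def)
    next
      case False
      then show ?thesis using a ta by (simp add: contract_def gl_act_def)
    qed
  qed
qed

lemma weight_char_drop_v0:
  assumes "\<And>x. x \<in> V - {v0} \<Longrightarrow> g' x = g x"
  shows "weight_char (V - {v0}) \<sigma> g' = weight_char V \<sigma> g"
proof -
  have "finite V" using quiver unfolding quiver_def by auto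
  then have "weight_char V \<sigma> g = det (g v0) powi \<sigma> v0 * (\<Prod>x\<in>V - {v0}. det (g x) powi \<sigma> x)"
    unfolding weight_char_def using prod.remove[OF _ v0] by blast
  also have "\<dots> = weight_char (V - {v0}) \<sigma> g'"
    using sigma0 assms unfolding weight_char_def by simp
  finally show ?thesis by simp
qed

lemma contract_coords_poly:
  assumes c: "c \<in> rep_coords (A - {b}) tA hA' \<beta>"
  shows "\<exists>q \<in> poly_funs (rep_coords A tA hA \<beta>). \<forall>W\<in>Rep A tA hA \<beta>. c (contract W) = (q W :: 'k::field)"
proof -
  obtain a i j where c: "c = (\<lambda>W. W a $$ (i, j))" and a: "a \<in> A" "a \<noteq> b"
    and i: "i < \<beta> (hA' a)" and j: "j < \<beta> (tA a)"
    using c unfolding rep_coords_def by auto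
  let ?C = "rep_coords A tA hA \<beta> :: (('a \<Rightarrow> 'k mat) \<Rightarrow> 'k) set"
  show ?thesis
  proof (cases "hA a = v0")
    case True
    let ?q = "\<lambda>W :: 'a \<Rightarrow> 'k mat. \<Sum>k\<in>{0..<\<beta> v0}. W b $$ (i, k) * W a $$ (k, j)"
    have ib: "i < \<beta> (hA b)" using i True by simp
    have coords: "(\<lambda>W :: 'a \<Rightarrow> 'k mat. W b $$ (i, k)) \<in> ?C" "(\<lambda>W :: 'a \<Rightarrow> 'k mat. W a $$ (k, j)) \<in> ?C"
      if k: "k < \<beta> v0" for k
      using rep_coordsI[of b A i \<beta> hA k tA] rep_coordsI[of a A k \<beta> hA j tA] b a(1) ib j k tail_b True
      by simp_all
    have "?q \<in> poly_funs ?C"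
    proof (rule poly_funs_sum)
      fix k assume "k \<in> {0..<\<beta> v0}"
      then have k: "k < \<beta> v0" by simp
      show "(\<lambda>W. W b $$ (i, k) * W a $$ (k, j)) \<in> poly_funs ?C"
        using coords[OF k] by (intro poly_funs.pf_mult poly_funs.pf_coord)
    qed simp
    moreover have "c (contract W) = ?q W" if W: "W \<in> Rep A tA hA \<beta>" for W
    proof -
      have "W b \<in> carrier_mat (\<beta> (hA b)) (\<beta> v0)" "W a \<in> carrier_mat (\<beta> v0) (\<beta> (tA a))"
        using Rep_carrier[OF W b] Rep_carrier[OF W a(1)] True tail_b by simp_all
      then show ?thesis using ib j True a by (simp add: c contract_def scalar_prod_def)
    qed
    ultimately show ?thesis by (intro bexI[of _ ?q] ballI)
  next
    case False
    then have "c \<in> ?C" using rep_coordsI[of a A i \<beta> hA j tA] a(1) i j unfolding c by simp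
    moreover have "c (contract W) = c W" for W :: "'a \<Rightarrow> 'k mat"
      using False a by (simp add: c contract_def)
    ultimately show ?thesis by (intro bexI[of _ c] poly_funs.pf_coord) auto
  qed
qed

(* Coordinates of the section are constants or coordinates, since E is a 0/1 matrix. *)
lemma expand_coords_poly:
  assumes c: "c \<in> rep_coords A tA hA \<beta>"
  shows "\<exists>q \<in> poly_funs (rep_coords (A - {b}) tA hA' \<beta>).
           \<forall>W\<in>Rep (A - {b}) tA hA' \<beta>. c (expand W) = (q W :: 'k::field)"
proof -
  obtain a i j where c: "c = (\<lambda>W. W a $$ (i, j))" and a: "a \<in> A"
    and i: "i < \<beta> (hA a)" and j: "j < \<beta> (tA a)"
    using c unfolding rep_coords_def by auto
  let ?C' = "rep_coords (A - {b}) tA hA' \<beta> :: (('a \<Rightarrow> 'k mat) \<Rightarrow> 'k) set"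
  have coord: "c \<in> poly_funs ?C'" if "a \<noteq> b" "hA a = v0 \<Longrightarrow> i < \<beta> (hA b)"
  proof (rule poly_funs.pf_coord)
    have "i < \<beta> (hA' a)" using i that by auto
    then show "c \<in> ?C'" using rep_coordsI[of a "A - {b}" i \<beta> hA' j tA] a j that unfolding c by simp
  qed
  consider "a = b" | "a \<noteq> b" "hA a \<noteq> v0" | "a \<noteq> b" "hA a = v0" by blast
  then show ?thesis
  proof cases
    case 1
    then show ?thesis
      by (intro bexI[of _ "\<lambda>_. (E :: 'k mat) $$ (i, j)"] poly_funs.pf_const)
        (simp add: c expand_def)
  next
    case 2
    then show ?thesis using coord by (intro bexI[of _ c]) (auto simp: c expand_def modify_v0_def)
  next
    case 3
    have entry: "c (expand W) = (if i < \<beta> (hA b) then c W else 0)"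
      if W: "W \<in> Rep (A - {b}) tA hA' \<beta>" for W
    proof -
      have "W a \<in> carrier_mat (\<beta> (hA b)) (\<beta> (tA a))" using Rep_carrier[OF W, of a] a 3 by simp
      then show ?thesis using i j a 3
        by (simp add: c expand_def modify_v0_def trunc_mat_def scalar_prod_def sum_delta_mult_left)
    qed
    show ?thesis
    proof (cases "i < \<beta> (hA b)")
      case True
      then show ?thesis using coord 3 entry by (intro bexI[of _ c]) auto
    next
      case False
      then show ?thesis using entry by (intro bexI[of _ "\<lambda>_. 0"] poly_funs.pf_const) auto
    qed
  qed
qed


lemma GL_drop_v0:
  assumes g: "g \<in> GL V \<beta>"
  shows "g(v0 := 1\<^sub>m 0) \<in> GL (V - {v0}) \<beta>"
proof -
  have "\<forall>x\<in>V - {v0}. g x \<in> carrier_mat (\<beta> x) (\<beta> x) \<and> det (g x) \<noteq> 0"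
    and "\<forall>x. x \<notin> V \<longrightarrow> g x = 1\<^sub>m 0" using g unfolding GL_def by simp_all
  then show ?thesis unfolding GL_def by simp
qed

lemma GL_extend_v0:
  assumes g': "g' \<in> GL (V - {v0}) \<beta>"
  shows "g'(v0 := 1\<^sub>m (\<beta> v0)) \<in> GL V \<beta>" and "g'(v0 := 1\<^sub>m (\<beta> v0), v0 := 1\<^sub>m 0) = g'"
proof -
  have on_V: "\<forall>x\<in>V - {v0}. g' x \<in> carrier_mat (\<beta> x) (\<beta> x) \<and> det (g' x) \<noteq> 0"
    and off_V: "\<And>x. x \<notin> V - {v0} \<Longrightarrow> g' x = 1\<^sub>m 0" using g' unfolding GL_def by simp_all
  show "g'(v0 := 1\<^sub>m (\<beta> v0), v0 := 1\<^sub>m 0) = g'" using off_V[of v0] by auto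
  show "g'(v0 := 1\<^sub>m (\<beta> v0)) \<in> GL V \<beta>" using on_V off_V v0 unfolding GL_def by auto
qed

lemma SI_pullback_contract:
  fixes F :: "('a \<Rightarrow> 'k::field mat) \<Rightarrow> 'k"
  assumes F: "F \<in> SI (V - {v0}) (A - {b}) tA hA' \<beta> \<sigma>"
  shows "pullback (Rep A tA hA \<beta>) contract F \<in> SI V A tA hA \<beta> \<sigma>"
proof (rule SI_pullback[where T = contract, OF F quiver contract_Rep contract_coords_poly])
  fix g :: "'v \<Rightarrow> 'k mat" and W :: "'a \<Rightarrow> 'k mat"
  assume g: "g \<in> GL V \<beta>" and W: "W \<in> Rep A tA hA \<beta>"
  have "weight_char (V - {v0}) \<sigma> (g(v0 := 1\<^sub>m 0)) = weight_char V \<sigma> g"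
    by (rule weight_char_drop_v0) simp
  then show "\<exists>g'\<in>GL (V - {v0}) \<beta>. weight_char (V - {v0}) \<sigma> g' = weight_char V \<sigma> g \<and>
      F (contract (gl_act A tA hA g W)) = F (gl_act (A - {b}) tA hA' g' (contract W))"
    using GL_drop_v0[OF g] contract_equivariant[OF g W] by (intro bexI[of _ "g(v0 := 1\<^sub>m 0)"]) simp_all
qed

(* For the pullback along the section, compatibility with the group action holds only up to
   the semi-invariant: it uses that f factors through the contraction map. *)
lemma SI_pullback_expand:
  fixes f :: "('a \<Rightarrow> 'k::field_char_0 mat) \<Rightarrow> 'k"
  assumes f: "f \<in> SI V A tA hA \<beta> \<sigma>"
  shows "pullback (Rep (A - {b}) tA hA' \<beta>) expand f \<in> SI (V - {v0}) (A - {b}) tA hA' \<beta> \<sigma>"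
proof (rule SI_pullback[where T = expand, OF f quiver_contracted expand_Rep expand_coords_poly])
  fix g' :: "'v \<Rightarrow> 'k mat" and W :: "'a \<Rightarrow> 'k mat" assume g': "g' \<in> GL (V - {v0}) \<beta>"
    and W: "W \<in> Rep (A - {b}) tA hA' \<beta>"
  define g where "g = g'(v0 := 1\<^sub>m (\<beta> v0))"
  have g: "g \<in> GL V \<beta>" and g_restrict: "g(v0 := 1\<^sub>m 0) = g'"
    using GL_extend_v0[OF g'] unfolding g_def by simp_all
  have "weight_char V \<sigma> g = weight_char (V - {v0}) \<sigma> g'"
    by (rule weight_char_drop_v0[symmetric]) (simp add: g_def)
  moreover have "f (expand (gl_act (A - {b}) tA hA' g' W)) = f (gl_act A tA hA g (expand W))"
  proof -
    have gX: "gl_act A tA hA g (expand W) \<in> Rep A tA hA \<beta>"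
      using gl_act_Rep[OF quiver g expand_Rep[OF W]] .
    have "contract (gl_act A tA hA g (expand W)) = gl_act (A - {b}) tA hA' g' W"
      using contract_equivariant[OF g expand_Rep[OF W]] contract_expand[OF W] g_restrict by simp
    then show ?thesis using SI_expand_contract[OF f gX] by simp
  qed
  ultimately show "\<exists>g\<in>GL V \<beta>. weight_char V \<sigma> g = weight_char (V - {v0}) \<sigma> g' \<and>
      f (expand (gl_act (A - {b}) tA hA' g' W)) = f (gl_act A tA hA g (expand W))"
    using g by (intro bexI[of _ g] conjI)
qed

theorem lin_iso_contraction:
  "lin_iso (SI V A tA hA \<beta> \<sigma> :: (('a \<Rightarrow> 'k::field_char_0 mat) \<Rightarrow> 'k) set)
           (SI (V - {v0}) (A - {b}) tA hA' \<beta> \<sigma>)"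
proof (rule lin_iso_pullbacks[OF SI_pullback_expand SI_pullback_contract])
  fix f :: "('a \<Rightarrow> 'k mat) \<Rightarrow> 'k" assume f: "f \<in> SI V A tA hA \<beta> \<sigma>"
  show "pullback (Rep A tA hA \<beta>) contract (pullback (Rep (A - {b}) tA hA' \<beta>) expand f) = f"
  proof
    fix W
    show "pullback (Rep A tA hA \<beta>) contract (pullback (Rep (A - {b}) tA hA' \<beta>) expand f) W = f W"
      using contract_Rep[of W] SI_expand_contract[OF f, of W] SI_vanishes[OF f, of W]
      by (simp add: pullback_def)
  qed
next
  fix F :: "('a \<Rightarrow> 'k mat) \<Rightarrow> 'k" assume F: "F \<in> SI (V - {v0}) (A - {b}) tA hA' \<beta> \<sigma>"
  show "pullback (Rep (A - {b}) tA hA' \<beta>) expand (pullback (Rep A tA hA \<beta>) contract F) = F"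
  proof
    fix W
    show "pullback (Rep (A - {b}) tA hA' \<beta>) expand (pullback (Rep A tA hA \<beta>) contract F) W = F W"
      using expand_Rep[of W] contract_expand[of W] SI_vanishes[OF F, of W] by (simp add: pullback_def)
  qed
qed


end

(* Acyclicity is only used to exclude loops, in particular a loop b at v0. *)
lemma no_loop: "no_oriented_cycles A tA hA \<Longrightarrow> a \<in> A \<Longrightarrow> tA a \<noteq> hA a"
  unfolding no_oriented_cycles_def by blast

(* Lemma 4.6. The first case is the contraction theorem; the second is the contraction theorem
   for the opposite quiver and character -sigma, transported back by duality on both sides. *)
theorem lemma4p6:
  fixes V :: "'v set" and A :: "'a set" and tA hA :: "'a \<Rightarrow> 'v"
    and \<beta> :: "'v \<Rightarrow> nat" and \<sigma> :: "'v \<Rightarrow> int" and v0 :: 'v and b :: 'a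
  assumes k: "alg_closed_char0 TYPE('k::field_char_0)"
    and Q: "quiver V A tA hA"
    and acyc: "no_oriented_cycles A tA hA"
    and v0: "v0 \<in> V" and b: "b \<in> A"
    and sigma0: "\<sigma> v0 = 0"
  shows
    "(tA b = v0 \<and> {a \<in> A. tA a = v0} = {b} \<and> \<beta> v0 \<ge> \<beta> (hA b) \<longrightarrow>
        lin_iso (SI V A tA hA \<beta> \<sigma> :: (('a \<Rightarrow> 'k mat) \<Rightarrow> 'k) set)
                (SI (V - {v0}) (A - {b}) tA (\<lambda>a. if hA a = v0 then hA b else hA a) \<beta> \<sigma>
                   :: (('a \<Rightarrow> 'k mat) \<Rightarrow> 'k) set))
   \<and> (hA b = v0 \<and> {a \<in> A. hA a = v0} = {b} \<and> \<beta> v0 \<ge> \<beta> (tA b) \<longrightarrow>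
        lin_iso (SI V A tA hA \<beta> \<sigma> :: (('a \<Rightarrow> 'k mat) \<Rightarrow> 'k) set)
                (SI (V - {v0}) (A - {b}) (\<lambda>a. if tA a = v0 then tA b else tA a) hA \<beta> \<sigma>
                   :: (('a \<Rightarrow> 'k mat) \<Rightarrow> 'k) set))"
proof (intro conjI impI)
  assume "tA b = v0 \<and> {a \<in> A. tA a = v0} = {b} \<and> \<beta> v0 \<ge> \<beta> (hA b)"
  then interpret vertex_contraction V A tA hA \<beta> \<sigma> v0 b
    using Q v0 b sigma0 no_loop[OF acyc b] by unfold_locales auto
  show "lin_iso (SI V A tA hA \<beta> \<sigma> :: (('a \<Rightarrow> 'k mat) \<Rightarrow> 'k) set)
      (SI (V - {v0}) (A - {b}) tA (\<lambda>a. if hA a = v0 then hA b else hA a) \<beta> \<sigma>)"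
    by (rule lin_iso_contraction)
next
  assume "hA b = v0 \<and> {a \<in> A. hA a = v0} = {b} \<and> \<beta> v0 \<ge> \<beta> (tA b)"
  then interpret op: vertex_contraction V A hA tA \<beta> "-\<sigma>" v0 b
    using Q v0 b sigma0 no_loop[OF acyc b] by unfold_locales (auto simp: quiver_def)
  have "lin_iso (SI V A tA hA \<beta> \<sigma> :: (('a \<Rightarrow> 'k mat) \<Rightarrow> 'k) set) (SI V A hA tA \<beta> (-\<sigma>))"
    by (rule lin_iso_opposite[OF Q])
  also have "lin_iso \<dots> (SI (V - {v0}) (A - {b}) hA (\<lambda>a. if tA a = v0 then tA b else tA a) \<beta> (-\<sigma>))"
    by (rule op.lin_iso_contraction)
  also have "lin_iso \<dots> (SI (V - {v0}) (A - {b}) (\<lambda>a. if tA a = v0 then tA b else tA a) hA \<beta> \<sigma>)"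
    using lin_iso_opposite[OF op.quiver_contracted, of \<beta> "-\<sigma>"] by (simp add: fun_Compl_def)
  finally show "lin_iso (SI V A tA hA \<beta> \<sigma> :: (('a \<Rightarrow> 'k mat) \<Rightarrow> 'k) set)
      (SI (V - {v0}) (A - {b}) (\<lambda>a. if tA a = v0 then tA b else tA a) hA \<beta> \<sigma>)" .
qed

end
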